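(* Let $(L,\preceq)$ be a lattice and $\delta$ a local congruence on $L$, and let $[x]_\delta,[y]_\delta\in L/\delta$. Suppose there exists a single class $[c]_\delta\in L/\delta$ such that $[x]_\delta\preceq_\delta[c]_\delta\preceq_\delta[y]_\delta$ and $[y]_\delta\preceq_\delta[c]_\delta\preceq_\delta[x]_\delta$, satisfying $x_1\preceq c_1\preceq y_1$ and $y_2\preceq c_2\preceq x_2$ for some $x_1,x_2\in[x]_\delta$, $c_1,c_2\in[c]_\delta$ and $y_1,y_2\in[y]_\delta$. Then $[x]_\delta=[y]_\delta$.
   Context: For an equivalence relation $\delta$ on $L$, $[a]_\delta$ is the class of $a$ and $L/\delta$ the set of classes. A local congruence on a lattice $(L,\preceq)$ is an equivalence relation each of whose classes is a sublattice of $L$ and is convex (if $u,v$ are in the class and $u\preceq w\preceq v$, then $w$ is in the class). A $\delta$-sequence from $p_0$ to $p_n$ is a finite sequence $(p_0,p_1,\dots,p_n)$ of elements of $L$ with $n\ge1$ such that for each $i\in\{1,\dots,n\}$ either $(p_{i-1},p_i)\in\delta$ or $p_{i-1}\preceq p_i$. The relation $\preceq_\delta$ on $L/\delta$ is defined by $[x]_\delta\preceq_\delta[y]_\delta$ iff there exists a $\delta$-sequence from some $x'\in[x]_\delta$ to some $y'\in[y]_\delta$. *)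

theory Defs
  imports Main
begin

text \<open>The lattice (L, \<preceq>) is the whole type 'a of class lattice; \<preceq> is \<le>.
  The class of a under delta is delta `` {a}.\<close>

definition sublattice :: "'a::lattice set \<Rightarrow> bool" where
  "sublattice S \<longleftrightarrow> (\<forall>u\<in>S. \<forall>v\<in>S. inf u v \<in> S \<and> sup u v \<in> S)"

definition convex_set :: "'a::lattice set \<Rightarrow> bool" where
  "convex_set S \<longleftrightarrow> (\<forall>u\<in>S. \<forall>v\<in>S. \<forall>w. u \<le> w \<and> w \<le> v \<longrightarrow> w \<in> S)"

definition local_congruence :: "('a::lattice \<times> 'a) set \<Rightarrow> bool" where
  "local_congruence \<delta> \<longleftrightarrow> equiv UNIV \<delta> \<and>
     (\<forall>a. sublattice (\<delta> `` {a}) \<and> convex_set (\<delta> `` {a}))"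

definition delta_sequence :: "('a::lattice \<times> 'a) set \<Rightarrow> 'a list \<Rightarrow> bool" where
  "delta_sequence \<delta> ps \<longleftrightarrow> length ps \<ge> 2 \<and>
     (\<forall>i\<in>{1..<length ps}. (ps ! (i - 1), ps ! i) \<in> \<delta> \<or> ps ! (i - 1) \<le> ps ! i)"

definition class_le :: "('a::lattice \<times> 'a) set \<Rightarrow> 'a set \<Rightarrow> 'a set \<Rightarrow> bool" where
  "class_le \<delta> X Y \<longleftrightarrow> (\<exists>x'\<in>X. \<exists>y'\<in>Y. \<exists>ps. delta_sequence \<delta> ps \<and> hd ps = x' \<and> last ps = y')"

end

theory Submission
  imports Defs
begin

(* If a1 \<le> b1 and b2 \<le> a2 with a1, a2 in one class and b1, b2 in another, then
   sup a1 b2 lies between b2 and sup b1 b2 and also between a1 and sup a1 a2; since classes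
   are sublattices and convex, it belongs to both classes, which therefore coincide.
   Applied to the pairs (x, c) and (c, y) this gives the proposition. *)

lemma local_congruence_equiv: "local_congruence \<delta> \<Longrightarrow> equiv UNIV \<delta>"
  by (simp add: local_congruence_def)

lemma local_congruence_mem_class_if_below_sup:
  assumes "local_congruence \<delta>" "u \<in> \<delta> `` {a}" "v \<in> \<delta> `` {a}"
    and "u \<le> w" "w \<le> sup u v"
  shows "w \<in> \<delta> `` {a}"
proof -
  have "sublattice (\<delta> `` {a})" and convex: "convex_set (\<delta> `` {a})"
    using assms(1) by (auto simp: local_congruence_def)
  then have "sup u v \<in> \<delta> `` {a}"
    using assms(2,3) by (simp add: sublattice_def)
  then show ?thesis
    using convex assms(2,4,5) unfolding convex_set_def by blast
qed

lemma local_congruence_class_eq_if_crossing: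
  assumes lc: "local_congruence \<delta>"
    and "a1 \<in> \<delta> `` {a}" "a2 \<in> \<delta> `` {a}" "b1 \<in> \<delta> `` {b}" "b2 \<in> \<delta> `` {b}"
    and "a1 \<le> b1" "b2 \<le> a2"
  shows "\<delta> `` {a} = \<delta> `` {b}"
proof -
  have "sup a1 b2 \<in> \<delta> `` {a}"
    using local_congruence_mem_class_if_below_sup[OF lc \<open>a1 \<in> _\<close> \<open>a2 \<in> _\<close>] \<open>b2 \<le> a2\<close>
    by (simp add: le_supI2)
  moreover have "sup a1 b2 \<in> \<delta> `` {b}"
    using local_congruence_mem_class_if_below_sup[OF lc \<open>b2 \<in> _\<close> \<open>b1 \<in> _\<close>] \<open>a1 \<le> b1\<close>
    by (simp add: le_supI1 sup_commute)
  ultimately have "(a, b) \<in> \<delta>"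
    using equiv_class_nondisjoint[OF local_congruence_equiv[OF lc]] by blast
  then show ?thesis
    using equiv_class_eq[OF local_congruence_equiv[OF lc]] by blast
qed

theorem proposition4p5:
  fixes \<delta> :: "('a::lattice \<times> 'a) set" and x y c :: 'a
  assumes "local_congruence \<delta>"
    and "class_le \<delta> (\<delta> `` {x}) (\<delta> `` {c})" and "class_le \<delta> (\<delta> `` {c}) (\<delta> `` {y})"
    and "class_le \<delta> (\<delta> `` {y}) (\<delta> `` {c})" and "class_le \<delta> (\<delta> `` {c}) (\<delta> `` {x})"
    and "x1 \<in> \<delta> `` {x}" and "x2 \<in> \<delta> `` {x}"
    and "c1 \<in> \<delta> `` {c}" and "c2 \<in> \<delta> `` {c}"
    and "y1 \<in> \<delta> `` {y}" and "y2 \<in> \<delta> `` {y}"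
    and "x1 \<le> c1" and "c1 \<le> y1" and "y2 \<le> c2" and "c2 \<le> x2"
  shows "\<delta> `` {x} = \<delta> `` {y}"
proof -
  have "\<delta> `` {x} = \<delta> `` {c}"
    using local_congruence_class_eq_if_crossing[of \<delta> x1 x x2 c1 c c2] assms by blast
  also have "\<dots> = \<delta> `` {y}"
    using local_congruence_class_eq_if_crossing[of \<delta> c1 c c2 y1 y y2] assms by blast
  finally show ?thesis .
qed

end
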